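(* For each $n\geq 2$ let $X_n$ be any set of $n$ distinct points in $\mathbb{R}^2$. Then $\lim_{n\to\infty}\rho(X_n)=1$, where $\rho(X)=P_X(M_X)/P_X(s^*_X)$.
   Context: For a finite $X=\{x_j:j\in J\}$, $P_X(s)=\sum_{j\in J}\|s-x_j\|^2+\max_{j\in J}\|s-x_j\|^2$, $s^*_X$ is its unique minimiser (the quadratic min-power centre), and $M_X=\frac{1}{|J|}\sum_jx_j$ is the centroid. *)

theory Defs
  imports "HOL-Analysis.Analysis"
begin

definition P :: "(real^2) set \<Rightarrow> real^2 \<Rightarrow> real" where
  "P X s = (\<Sum>x\<in>X. (norm (s - x))\<^sup>2) + Max ((\<lambda>x. (norm (s - x))\<^sup>2) ` X)"

definition smin :: "(real^2) set \<Rightarrow> real^2" where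
  "smin X = (THE s. \<forall>t. P X s \<le> P X t)"

definition centroid :: "(real^2) set \<Rightarrow> real^2" where
  "centroid X = (1 / real (card X)) *\<^sub>R (\<Sum>x\<in>X. x)"

definition rho :: "(real^2) set \<Rightarrow> real" where
  "rho X = P X (centroid X) / P X (smin X)"

end

theory Submission
  imports Defs
begin

text \<open>
  Write \<open>S\<close> for the sum and \<open>A\<close> for the maximum of the squared distances from the
  centroid \<open>M\<close> of an \<open>n\<close>-point set, so that \<open>P(M) = S + A\<close>. By the parallel axis
  theorem \<open>P(s) = n|s - M|\<^sup>2 + S + max\<^sub>x |s - x|\<^sup>2\<close>, and if \<open>x\<^sub>0\<close> is a point farthest
  from \<open>M\<close> then \<open>|M - x\<^sub>0| \<le> |s - M| + |s - x\<^sub>0|\<close>; minimising \<open>n d\<^sup>2 + e\<^sup>2\<close> subject to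
  \<open>d + e \<ge> |M - x\<^sub>0|\<close> gives \<open>P(s) \<ge> S + n/(n+1) A\<close> for every \<open>s\<close>. Hence
  \<open>1 \<le> \<rho>(X) \<le> 1 + 1/n\<close>. Existence and uniqueness of the minimiser, needed to make
  sense of \<open>THE\<close>, follow from coercivity and strict midpoint convexity of \<open>P\<close>.
\<close>

lemma sum_norm_diff_power2_eq:
  fixes X :: "'a::real_inner set"
  assumes "(\<Sum>x\<in>X. x) = real (card X) *\<^sub>R m"
  shows "(\<Sum>x\<in>X. (norm (s - x))\<^sup>2) = real (card X) * (norm (s - m))\<^sup>2 + (\<Sum>x\<in>X. (norm (m - x))\<^sup>2)"
proof -
  have "(\<Sum>x\<in>X. inner (s - m) (m - x)) = inner (s - m) (real (card X) *\<^sub>R m - (\<Sum>x\<in>X. x))"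
    by (simp only: inner_sum_right[symmetric] sum_subtractf sum_constant_scaleR)
  also have "\<dots> = 0" using assms by simp
  finally have cross_terms: "(\<Sum>x\<in>X. inner (s - m) (m - x)) = 0" .
  have expand: "(norm (s - x))\<^sup>2 = (norm (s - m))\<^sup>2 + 2 * inner (s - m) (m - x) + (norm (m - x))\<^sup>2"
    for x
    using dot_norm[of "s - m" "m - x"] by simp
  have "(\<Sum>x\<in>X. (norm (s - x))\<^sup>2)
      = (\<Sum>x\<in>X. (norm (s - m))\<^sup>2 + 2 * inner (s - m) (m - x) + (norm (m - x))\<^sup>2)"
    by (rule sum.cong[OF refl expand])
  also have "\<dots> = real (card X) * (norm (s - m))\<^sup>2 + 2 * (\<Sum>x\<in>X. inner (s - m) (m - x))
      + (\<Sum>x\<in>X. (norm (m - x))\<^sup>2)"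
    by (simp add: sum.distrib sum_distrib_left)
  finally show ?thesis using cross_terms by simp
qed

lemma norm_midpoint_diff_power2:
  fixes a b x :: "'a::real_inner"
  shows "(norm (midpoint a b - x))\<^sup>2 = ((norm (a - x))\<^sup>2 + (norm (b - x))\<^sup>2) / 2 - (norm (a - b))\<^sup>2 / 4"
proof -
  have parallelogram:
    "(norm ((1/2) *\<^sub>R (u + v)))\<^sup>2 = ((norm u)\<^sup>2 + (norm v)\<^sup>2) / 2 - (norm (u - v))\<^sup>2 / 4" for u v :: 'a
    unfolding power2_norm_eq_inner by (simp add: inner_add inner_diff inner_commute field_simps)
  have "(1/2) *\<^sub>R ((a - x) + (b - x)) = (1/2) *\<^sub>R (a + b) - (1/2) *\<^sub>R (x + x)"
    by (simp add: algebra_simps)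
  also have "(1/2) *\<^sub>R (x + x) = x"
    by (simp flip: scaleR_2)
  finally have "midpoint a b - x = (1/2) *\<^sub>R ((a - x) + (b - x))"
    by (simp add: midpoint_def)
  moreover have "a - b = (a - x) - (b - x)" by simp
  ultimately show ?thesis by (metis parallelogram)
qed

lemma weighted_power2_sum_ge:
  fixes n d e :: real
  assumes "n > 0"
  shows "n / (n + 1) * (d + e)\<^sup>2 \<le> n * d\<^sup>2 + e\<^sup>2"
proof -
  have "(n + 1) * (n * d\<^sup>2 + e\<^sup>2) - n * (d + e)\<^sup>2 = (n * d - e)\<^sup>2"
    by (simp add: power2_eq_square algebra_simps)
  then have "n * (d + e)\<^sup>2 \<le> (n + 1) * (n * d\<^sup>2 + e\<^sup>2)"
    by (smt (verit) zero_le_power2)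
  then show ?thesis using assms by (simp add: field_simps)
qed

lemma continuous_on_Max_image:
  fixes f :: "'i \<Rightarrow> 'a::topological_space \<Rightarrow> real"
  assumes "finite I" "I \<noteq> {}" "\<And>i. i \<in> I \<Longrightarrow> continuous_on S (f i)"
  shows "continuous_on S (\<lambda>s. Max ((\<lambda>i. f i s) ` I))"
  using assms
proof (induction I rule: finite_ne_induct)
  case (insert i I)
  then show ?case by (simp add: continuous_on_max)
qed simp

lemma sum_eq_card_scaleR_centroid:
  assumes "finite X" "X \<noteq> {}"
  shows "(\<Sum>x\<in>X. x) = real (card X) *\<^sub>R centroid X"
  using assms by (simp add: centroid_def)

lemma P_eq_centroid:
  assumes "finite X" "X \<noteq> {}"
  shows "P X s = real (card X) * (norm (s - centroid X))\<^sup>2 + (\<Sum>x\<in>X. (norm (centroid X - x))\<^sup>2)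
    + Max ((\<lambda>x. (norm (s - x))\<^sup>2) ` X)"
  unfolding P_def sum_norm_diff_power2_eq[OF sum_eq_card_scaleR_centroid[OF assms], of s] ..

lemma Max_norm_diff_power2_ge:
  assumes "finite X" "x \<in> X"
  shows "(norm (s - x))\<^sup>2 \<le> Max ((\<lambda>x. (norm (s - x))\<^sup>2) ` X)"
  using assms by (auto intro: Max_ge)

lemma P_ge_norm_diff_centroid:
  assumes "finite X" "X \<noteq> {}"
  shows "(norm (s - centroid X))\<^sup>2 \<le> P X s"
proof -
  obtain x where "x \<in> X" using assms by blast
  then have "0 \<le> Max ((\<lambda>x. (norm (s - x))\<^sup>2) ` X)"
    using Max_norm_diff_power2_ge[OF assms(1)] by (meson order_trans zero_le_power2)
  moreover have "1 \<le> real (card X)" using assms by (simp add: Suc_le_eq card_gt_0_iff)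
  ultimately show ?thesis
    unfolding P_eq_centroid[OF assms]
    by (smt (verit) mult_le_cancel_right1 sum_nonneg zero_le_power2)
qed

lemma continuous_on_P:
  assumes "finite X" "X \<noteq> {}"
  shows "continuous_on S (P X)"
  unfolding P_def[abs_def]
  by (intro continuous_intros continuous_on_Max_image assms)

lemma P_attains_min:
  assumes "finite X" "X \<noteq> {}"
  obtains s where "\<And>t. P X s \<le> P X t"
proof -
  let ?M = "centroid X"
  define R where "R = sqrt (P X ?M)"
  have "0 \<le> P X ?M" using P_ge_norm_diff_centroid[OF assms] by (meson order_trans zero_le_power2)
  then have R: "0 \<le> R" "R\<^sup>2 = P X ?M" unfolding R_def by simp_all
  obtain s where s: "s \<in> cball ?M R" "\<And>t. t \<in> cball ?M R \<Longrightarrow> P X s \<le> P X t"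
    using continuous_attains_inf[OF compact_cball _ continuous_on_P[OF assms]] R(1)
    by (metis centre_in_cball empty_iff)
  have "P X s \<le> P X t" for t
  proof (cases "t \<in> cball ?M R")
    case False
    then have "R\<^sup>2 < (norm (t - ?M))\<^sup>2"
      using R(1) by (simp add: dist_norm norm_minus_commute power_strict_mono)
    then have "P X ?M \<le> P X t" using R(2) P_ge_norm_diff_centroid[OF assms, of t] by linarith
    then show ?thesis using s(2)[of ?M] R(1) by simp
  qed (use s in simp)
  then show thesis by (rule that)
qed

lemma P_midpoint_less:
  assumes "finite X" "X \<noteq> {}" "s \<noteq> t"
  shows "P X (midpoint s t) < (P X s + P X t) / 2"
proof -
  let ?Max = "\<lambda>u. Max ((\<lambda>x. (norm (u - x))\<^sup>2) ` X)"
  have "(\<Sum>x\<in>X. (norm (midpoint s t - x))\<^sup>2)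
      = ((\<Sum>x\<in>X. (norm (s - x))\<^sup>2) + (\<Sum>x\<in>X. (norm (t - x))\<^sup>2)) / 2
        - real (card X) * (norm (s - t))\<^sup>2 / 4"
    by (simp add: norm_midpoint_diff_power2 sum_subtractf sum.distrib flip: sum_divide_distrib)
  moreover have "0 < real (card X) * (norm (s - t))\<^sup>2"
    using assms by (simp add: card_gt_0_iff)
  moreover have "(norm (midpoint s t - x))\<^sup>2 \<le> (?Max s + ?Max t) / 2" if "x \<in> X" for x
    using Max_norm_diff_power2_ge[OF assms(1) that, of s] Max_norm_diff_power2_ge[OF assms(1) that, of t]
      zero_le_power2[of "norm (s - t)"]
    unfolding norm_midpoint_diff_power2 by argo
  then have "?Max (midpoint s t) \<le> (?Max s + ?Max t) / 2"
    using assms by (intro Max.boundedI) auto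
  ultimately show ?thesis unfolding P_def by argo
qed

lemma P_smin_le:
  assumes "finite X" "X \<noteq> {}"
  shows "P X (smin X) \<le> P X t"
proof -
  obtain s where s: "\<And>t. P X s \<le> P X t" using P_attains_min[OF assms] by blast
  have unique: "s' = s" if "\<forall>t. P X s' \<le> P X t" for s'
  proof (rule ccontr)
    assume "s' \<noteq> s"
    then have "P X (midpoint s' s) < (P X s' + P X s) / 2" by (rule P_midpoint_less[OF assms])
    with that[rule_format, of "midpoint s' s"] s[of "midpoint s' s"] show False by argo
  qed
  have "\<forall>t. P X (smin X) \<le> P X t"
    unfolding smin_def by (rule theI[of _ s, OF _ unique]) (simp add: s)
  then show ?thesis ..
qed

lemma P_ge_centroid_bound:
  assumes "finite X" "X \<noteq> {}"
  shows "(\<Sum>x\<in>X. (norm (centroid X - x))\<^sup>2)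
      + real (card X) / (real (card X) + 1) * Max ((\<lambda>x. (norm (centroid X - x))\<^sup>2) ` X) \<le> P X s"
proof -
  let ?M = "centroid X" and ?n = "real (card X)"
  have "Max ((\<lambda>x. (norm (?M - x))\<^sup>2) ` X) \<in> (\<lambda>x. (norm (?M - x))\<^sup>2) ` X"
    using assms by (intro Max_in) auto
  then obtain x0 where x0: "x0 \<in> X" "Max ((\<lambda>x. (norm (?M - x))\<^sup>2) ` X) = (norm (?M - x0))\<^sup>2"
    by auto
  define d e where "d = norm (s - ?M)" and "e = norm (s - x0)"
  have "norm (?M - x0) \<le> d + e"
    unfolding d_def e_def using dist_triangle[of ?M x0 s] by (simp add: dist_norm norm_minus_commute)
  then have "(norm (?M - x0))\<^sup>2 \<le> (d + e)\<^sup>2" by (simp add: power_mono)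
  moreover have "0 < ?n" using assms by (simp add: card_gt_0_iff)
  ultimately have "?n / (?n + 1) * (norm (?M - x0))\<^sup>2 \<le> ?n * d\<^sup>2 + e\<^sup>2"
    using weighted_power2_sum_ge[of ?n d e] by (smt (verit) divide_nonneg_pos mult_left_mono)
  moreover have "e\<^sup>2 \<le> Max ((\<lambda>x. (norm (s - x))\<^sup>2) ` X)"
    unfolding e_def using assms(1) x0(1) by (rule Max_norm_diff_power2_ge)
  ultimately show ?thesis
    unfolding P_eq_centroid[OF assms, of s] x0(2) d_def by linarith
qed

lemma Max_norm_diff_power2_pos:
  fixes c :: "'a::real_normed_vector"
  assumes "finite X" "x \<in> X" "y \<in> X" "x \<noteq> y"
  shows "0 < Max ((\<lambda>x. (norm (c - x))\<^sup>2) ` X)"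
proof -
  obtain z where "z \<in> X" "c \<noteq> z" using assms(2-4) by blast
  then have "0 < (norm (c - z))\<^sup>2" by simp
  then show ?thesis
    using Max_norm_diff_power2_ge[OF assms(1) \<open>z \<in> X\<close>, of c] by linarith
qed

lemma rho_bounds:
  assumes "finite X" "2 \<le> card X"
  shows "1 \<le> rho X" "rho X \<le> 1 + 1 / real (card X)"
proof -
  let ?M = "centroid X" and ?n = "real (card X)"
  let ?S = "\<Sum>x\<in>X. (norm (?M - x))\<^sup>2" and ?A = "Max ((\<lambda>x. (norm (?M - x))\<^sup>2) ` X)"
  have X: "X \<noteq> {}" using assms by auto
  have n: "0 < ?n" using assms by simp
  obtain x y where "x \<in> X" "y \<in> X" "x \<noteq> y"
    using assms by (metis card_le_Suc0_iff_eq not_less_eq_eq numeral_2_eq_2)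
  then have "0 < ?A" by (rule Max_norm_diff_power2_pos[OF assms(1)])
  moreover have "0 \<le> ?S" by (simp add: sum_nonneg)
  moreover have lower: "?S + ?n / (?n + 1) * ?A \<le> P X (smin X)"
    by (rule P_ge_centroid_bound[OF assms(1) X])
  ultimately have pos: "0 < P X (smin X)" using n by (smt (verit) divide_pos_pos mult_pos_pos)
  have "P X (smin X) \<le> P X ?M" by (rule P_smin_le[OF assms(1) X])
  with pos show "1 \<le> rho X" unfolding rho_def by simp
  have "?n / (?n + 1) * ?S \<le> ?S"
    using \<open>0 \<le> ?S\<close> n by (intro mult_left_le_one_le) auto
  then have "?n / (?n + 1) * P X ?M \<le> P X (smin X)"
    using lower unfolding P_def by (simp add: distrib_left)
  with pos n show "rho X \<le> 1 + 1 / ?n" unfolding rho_def by (simp add: field_simps)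
qed

theorem corollary3:
  fixes Xs :: "nat \<Rightarrow> (real^2) set"
  assumes "\<And>n. n \<ge> 2 \<Longrightarrow> finite (Xs n) \<and> card (Xs n) = n"
  shows "(\<lambda>n. rho (Xs n)) \<longlonglongrightarrow> 1"
proof (rule real_tendsto_sandwich[where f = "\<lambda>_. 1" and h = "\<lambda>n. 1 + 1 / real n"])
  have "\<forall>\<^sub>F n in sequentially. finite (Xs n) \<and> card (Xs n) = n"
    using eventually_ge_at_top[of 2] by eventually_elim (rule assms)
  then show "\<forall>\<^sub>F n in sequentially. 1 \<le> rho (Xs n)"
    and "\<forall>\<^sub>F n in sequentially. rho (Xs n) \<le> 1 + 1 / real n"
    using eventually_ge_at_top[of 2]
    by (eventually_elim, metis rho_bounds)+
  show "(\<lambda>n. 1 + 1 / real n) \<longlonglongrightarrow> 1"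
    using tendsto_add[OF tendsto_const lim_const_over_n[of 1]] by simp
qed simp

end
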